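(* Let $A_1,\dots,A_m\in\mathbb{S}^n$, $b\in\mathbb{R}^m$, $C\in\mathbb{S}^n$, let Assumption 1 hold for some $p$, and assume $\mathcal{C}$ is compact. Let $f^\star$ be the optimal value of (SDP) and $R=\max_{X\in\mathcal{C}}\operatorname{tr}(X)<\infty$. For any $Y\in\mathcal{M}_p$, if $\|\operatorname{grad}g(Y)\|\le\varepsilon_g$ and $S(Y)\succeq-\frac{\varepsilon_H}{2}I_n$, then $0\le2(g(Y)-f^\star)\le\varepsilon_HR+\varepsilon_g\sqrt{R}$. If $I_n\in\operatorname{im}(\mathcal{A}^* )$, the right-hand side can be replaced by $\varepsilon_HR$; this holds in particular if all $X\in\mathcal{C}$ have the same trace and $\mathcal{C}$ contains a positive definite matrix.
   Context: $\mathbb{S}^n$: real symmetric $n\times n$ matrices; $\langle U,V\rangle=\operatorname{tr}(U^\top V)$, $\|\cdot\|$ Frobenius norm. $\mathcal{A}(X)_i=\langle A_i,X\rangle$, $\mathcal{A}^*(\nu)=\sum_i\nu_iA_i$. $\mathcal{C}=\{X\in\mathbb{S}^n:\mathcal{A}(X)=b,\ X\succeq0\}$ (non-empty); (SDP): minimize $\langle C,X\rangle$ over $\mathcal{C}$. $\mathcal{M}_p=\{Y\in\mathbb{R}^{n\times p}:\mathcal{A}(YY^\top)=b\}$, $g(Y)=\langle CY,Y\rangle$. Assumption 1 (for $p$): either (a) $A_1Y,\dots,A_mY$ are linearly independent for all $Y\in\mathcal{M}_p$, or (b) $\operatorname{span}\{A_1Y,\dots,A_mY\}$ has constant dimension on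 an open neighborhood of $\mathcal{M}_p$ in $\mathbb{R}^{n\times p}$. For $Y\in\mathcal{M}_p$: $G_{ij}=\langle A_iY,A_jY\rangle$, $\mu=G^\dagger\mathcal{A}(CYY^\top)$, $S(Y)=C-\mathcal{A}^*(\mu)$; the Riemannian gradient is $\operatorname{grad}g(Y)=2S(Y)Y$. *)

theory Defs
  imports "HOL-Analysis.Analysis"
begin

text \<open>Matrices are rendered as HOL-Analysis arrays: an n x p real matrix is
  real^'p^'n (row index 'n, column index 'p). The dimensions n, p, m are the
  cardinalities of the finite index types 'n, 'p, 'm.\<close>

definition sym_mat :: "real^'n^'n \<Rightarrow> bool" where
  "sym_mat M \<longleftrightarrow> transpose M = M"

definition frob :: "real^'q^'n \<Rightarrow> real^'q^'n \<Rightarrow> real" where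
  "frob U V = trace (transpose U ** V)"

definition frob_norm :: "real^'q^'n \<Rightarrow> real" where
  "frob_norm U = sqrt (frob U U)"

definition psd :: "real^'n^'n \<Rightarrow> bool" where
  "psd M \<longleftrightarrow> sym_mat M \<and> (\<forall>x. 0 \<le> x \<bullet> (M *v x))"

definition pd :: "real^'n^'n \<Rightarrow> bool" where
  "pd M \<longleftrightarrow> sym_mat M \<and> (\<forall>x. x \<noteq> 0 \<longrightarrow> 0 < x \<bullet> (M *v x))"

definition pinv :: "real^'k^'j \<Rightarrow> real^'j^'k" where
  "pinv G = (THE H. G ** H ** G = G \<and> H ** G ** H = H \<and>
                    transpose (G ** H) = G ** H \<and> transpose (H ** G) = H ** G)"

definition opA :: "(real^'n^'n)^'m \<Rightarrow> real^'n^'n \<Rightarrow> real^'m" where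
  "opA A X = (\<chi> i. frob (A$i) X)"

definition opAadj :: "(real^'n^'n)^'m \<Rightarrow> real^'m \<Rightarrow> real^'n^'n" where
  "opAadj A \<nu> = (\<Sum>i\<in>UNIV. (\<nu>$i) *\<^sub>R (A$i))"

definition feas :: "(real^'n^'n)^'m \<Rightarrow> real^'m \<Rightarrow> (real^'n^'n) set" where
  "feas A b = {X. sym_mat X \<and> opA A X = b \<and> psd X}"

definition Mp :: "(real^'n^'n)^'m \<Rightarrow> real^'m \<Rightarrow> (real^'p^'n) set" where
  "Mp A b = {Y. opA A (Y ** transpose Y) = b}"

definition gfun :: "real^'n^'n \<Rightarrow> real^'p^'n \<Rightarrow> real" where
  "gfun C Y = frob (C ** Y) Y"

definition Gram :: "(real^'n^'n)^'m \<Rightarrow> real^'p^'n \<Rightarrow> real^'m^'m" where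
  "Gram A Y = (\<chi> i j. frob (A$i ** Y) (A$j ** Y))"

definition mu :: "(real^'n^'n)^'m \<Rightarrow> real^'n^'n \<Rightarrow> real^'p^'n \<Rightarrow> real^'m" where
  "mu A C Y = pinv (Gram A Y) *v opA A (C ** Y ** transpose Y)"

definition Smat :: "(real^'n^'n)^'m \<Rightarrow> real^'n^'n \<Rightarrow> real^'p^'n \<Rightarrow> real^'n^'n" where
  "Smat A C Y = C - opAadj A (mu A C Y)"

definition rgrad :: "(real^'n^'n)^'m \<Rightarrow> real^'n^'n \<Rightarrow> real^'p^'n \<Rightarrow> real^'p^'n" where
  "rgrad A C Y = 2 *\<^sub>R (Smat A C Y ** Y)"

definition assumption1 :: "(real^'n^'n)^'m \<Rightarrow> real^'m \<Rightarrow> ('p::finite) itself \<Rightarrow> bool" where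
  "assumption1 A b (_::'p itself) \<longleftrightarrow>
     (\<forall>Y::real^'p^'n. Y \<in> Mp A b \<longrightarrow>
        (\<forall>c::'m \<Rightarrow> real. (\<Sum>i\<in>UNIV. c i *\<^sub>R (A$i ** Y)) = 0 \<longrightarrow> (\<forall>i. c i = 0)))
   \<or> (\<exists>U::(real^'p^'n) set. open U \<and> Mp A b \<subseteq> U \<and>
        (\<exists>r. \<forall>Y\<in>U. dim (span (range (\<lambda>i. A$i ** Y))) = r))"

end

theory Submission
  imports Defs
begin

text \<open>For feasible \<open>X\<close> we have \<open>\<A>(X) = b = \<A>(Y Y\<^sup>T)\<close>, and \<open>C = S + \<A>\<^sup>*(\<mu>)\<close> with
  \<open>S = S(Y)\<close>, so \<open>g(Y) - \<langle>C, X\<rangle> = \<langle>S, Y Y\<^sup>T\<rangle> - \<langle>S, X\<rangle>\<close>. Since the positive semidefinite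
  cone is self-dual, \<open>S + (\<epsilon>\<^sub>H/2) I \<succeq> 0\<close> gives \<open>-\<langle>S, X\<rangle> \<le> (\<epsilon>\<^sub>H/2) tr X \<le> \<epsilon>\<^sub>H R / 2\<close>, while
  \<open>2 \<langle>S, Y Y\<^sup>T\<rangle> = \<langle>grad g(Y), Y\<rangle> \<le> \<epsilon>\<^sub>g \<parallel>Y\<parallel>\<close> and \<open>\<parallel>Y\<parallel>\<^sup>2 = tr (Y Y\<^sup>T) \<le> R\<close>.
  The multiplier \<open>\<mu>\<close> solves the normal equations \<open>G \<mu> = \<A>(C Y Y\<^sup>T)\<close> (which are consistent,
  and \<open>G G\<^sup>\<dagger> G = G\<close>), hence \<open>\<A>(S Y Y\<^sup>T) = 0\<close>; so if \<open>I = \<A>\<^sup>*(\<nu>)\<close> then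
  \<open>\<langle>S, Y Y\<^sup>T\<rangle> = \<nu> \<bullet> \<A>(S Y Y\<^sup>T) = 0\<close>.\<close>

lemma frob_eq_inner: "frob U V = U \<bullet> V"
  unfolding frob_def trace_def matrix_matrix_mult_def transpose_def inner_vec_def
  apply simp by (rule sum.swap)

lemma frob_norm_eq_norm: "frob_norm U = norm U"
  by (simp add: frob_norm_def frob_eq_inner norm_eq_sqrt_inner)

lemma frob_commute: "frob U V = frob V U"
  by (simp add: frob_eq_inner inner_commute)

lemma frob_mult_right: "frob (M ** Y) Z = frob M (Z ** transpose Y)"
  unfolding frob_def matrix_transpose_mul
  by (metis matrix_mul_assoc trace_mul_sym)

lemma frob_mat1_left: "frob (mat 1) X = trace X"
  by (simp add: frob_def matrix_mul_lid)

lemma frob_opAadj: "frob (opAadj A \<nu>) X = \<nu> \<bullet> opA A X"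
  unfolding frob_eq_inner opAadj_def opA_def inner_sum_left inner_scaleR_left
  by (simp add: inner_vec_def)

lemma norm_squared_eq_trace: "(norm Y)\<^sup>2 = trace (Y ** transpose Y)"
  by (metis frob_def frob_eq_inner power2_norm_eq_inner trace_mul_sym)

lemma sym_mat_iff: "sym_mat X \<longleftrightarrow> (\<forall>i j. X$i$j = X$j$i)"
  unfolding sym_mat_def transpose_def vec_eq_iff by auto

lemma inner_axis_mult_axis: "axis j 1 \<bullet> (X *v axis i 1) = X$j$i"
  by (simp add: matrix_vector_mult_basis inner_axis' column_def)

lemma sym_mat_inner_commute: "sym_mat X \<Longrightarrow> y \<bullet> (X *v x) = x \<bullet> (X *v y)"
  by (metis dot_lmul_matrix inner_commute sym_mat_def transpose_matrix_vector)

lemma sym_matI_self_adjoint: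
  assumes "\<And>x y. (M *v x) \<bullet> y = x \<bullet> (M *v y)"
  shows "sym_mat M"
  unfolding sym_mat_iff
  by (metis assms inner_axis_mult_axis inner_commute)

lemma sym_mat_mult_transpose: "sym_mat (Y ** transpose Y)"
  by (simp add: sym_mat_def matrix_transpose_mul)

lemma nonneg_quadratic_discriminant:
  fixes a b c :: real
  assumes nonneg: "\<And>t. 0 \<le> a + 2*b*t + c*t\<^sup>2" and "0 \<le> c"
  shows "b\<^sup>2 \<le> a*c"
proof (cases "c = 0")
  case True
  have "b = 0"
  proof (rule ccontr)
    assume "b \<noteq> 0"
    have "0 \<le> a + 2*b*(-(a+1)/(2*b)) + c*(-(a+1)/(2*b))\<^sup>2" by (rule nonneg)
    also have "\<dots> = -1" using True \<open>b \<noteq> 0\<close> by (simp add: field_simps)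
    finally show False by simp
  qed
  then show ?thesis using True by simp
next
  case False
  then have "c > 0" using \<open>0 \<le> c\<close> by simp
  have "0 \<le> a + 2*b*(-b/c) + c*(-b/c)\<^sup>2" by (rule nonneg)
  also have "\<dots> = (a*c - b\<^sup>2)/c" using \<open>c > 0\<close> by (simp add: field_simps power2_eq_square)
  finally show ?thesis using \<open>c > 0\<close> by (simp add: zero_le_divide_iff)
qed

lemma psd_cauchy_schwarz:
  assumes "psd X"
  shows "(x \<bullet> (X *v y))\<^sup>2 \<le> (x \<bullet> (X *v x)) * (y \<bullet> (X *v y))"
proof (rule nonneg_quadratic_discriminant)
  have sym: "sym_mat X" and nonneg: "\<And>z. 0 \<le> z \<bullet> (X *v z)"
    using assms by (auto simp: psd_def)
  show "0 \<le> y \<bullet> (X *v y)" by (rule nonneg)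
  fix t
  have "0 \<le> (x + t *\<^sub>R y) \<bullet> (X *v (x + t *\<^sub>R y))" by (rule nonneg)
  also have "\<dots> = x \<bullet> (X *v x) + 2 * (x \<bullet> (X *v y)) * t + (y \<bullet> (X *v y)) * t\<^sup>2"
    using sym_mat_inner_commute[OF sym, of y x]
    by (simp add: matrix_vector_right_distrib inner_add_left inner_add_right algebra_simps
        power2_eq_square)
  finally show "0 \<le> x \<bullet> (X *v x) + 2 * (x \<bullet> (X *v y)) * t + (y \<bullet> (X *v y)) * t\<^sup>2" .
qed

lemma psd_diag_nonneg: "psd X \<Longrightarrow> 0 \<le> X$i$i"
  unfolding psd_def by (metis inner_axis_mult_axis)

lemma psd_entry_squared_le: "psd X \<Longrightarrow> (X$j$i)\<^sup>2 \<le> X$j$j * X$i$i"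
  using psd_cauchy_schwarz[of X "axis j 1" "axis i 1"] by (simp add: inner_axis_mult_axis)

definition outer :: "real^'n \<Rightarrow> real^'n^'n" where
  "outer w = (\<chi> i j. w$i * w$j)"

lemma outer_mult_vector: "outer w *v x = (w \<bullet> x) *\<^sub>R w"
  by (simp add: outer_def matrix_vector_mult_def vec_eq_iff inner_vec_def sum_distrib_left
      algebra_simps)

lemma frob_outer: "frob M (outer w) = w \<bullet> (M *v w)"
  by (simp add: frob_eq_inner outer_def inner_vec_def matrix_vector_mult_def sum_distrib_left
      algebra_simps)

lemma psd_frob_outer_nonneg: "psd M \<Longrightarrow> 0 \<le> frob M (outer w)"
  by (simp add: frob_outer psd_def)

text \<open>One step of a Cholesky factorisation.\<close>

lemma psd_minus_outer_column:
  assumes X: "psd X" and pos: "0 < X$i$i"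
  defines "w \<equiv> (1 / sqrt (X$i$i)) *\<^sub>R column i X"
  shows "psd (X - outer w)" and "(X - outer w)$j$j = X$j$j - (X$j$i)\<^sup>2 / X$i$i"
proof -
  let ?d = "X$i$i"
  have sym: "sym_mat X" using X by (simp add: psd_def)
  have w: "w$j = X$j$i / sqrt ?d" for j
    by (simp add: w_def column_def)
  show "(X - outer w)$j$j = X$j$j - (X$j$i)\<^sup>2 / ?d"
    using pos by (simp add: outer_def w power2_eq_square)
  have "0 \<le> x \<bullet> ((X - outer w) *v x)" for x
  proof -
    have wx: "w \<bullet> x = x \<bullet> (X *v axis i 1) / sqrt ?d"
      by (simp add: w_def matrix_vector_mult_basis inner_commute)
    have "(x \<bullet> (X *v axis i 1))\<^sup>2 \<le> (x \<bullet> (X *v x)) * ?d"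
      using psd_cauchy_schwarz[OF X, of x "axis i 1"] by (simp add: inner_axis_mult_axis)
    then have "(w \<bullet> x)\<^sup>2 \<le> x \<bullet> (X *v x)"
      using pos by (simp add: wx power_divide pos_divide_le_eq)
    then show ?thesis
      by (simp add: matrix_vector_mult_diff_rdistrib outer_mult_vector inner_diff_right
          power2_eq_square inner_commute)
  qed
  moreover have "sym_mat (X - outer w)"
    using sym by (simp add: sym_mat_iff outer_def mult.commute)
  ultimately show "psd (X - outer w)" by (simp add: psd_def)
qed

text \<open>Self-duality of the positive semidefinite cone, by peeling off rank-one terms.\<close>

lemma psd_frob_nonneg:
  assumes M: "psd M"
  shows "psd X \<Longrightarrow> 0 \<le> frob M X"
proof (induction "card {i. X$i$i \<noteq> 0}" arbitrary: X rule: less_induct)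
  case less
  show ?case
  proof (cases "\<forall>i. X$i$i = 0")
    case True
    then have "X = 0"
      using psd_entry_squared_le[OF less.prems] by (simp add: vec_eq_iff)
    then show ?thesis by (simp add: frob_eq_inner)
  next
    case False
    then obtain i where "X$i$i \<noteq> 0" by blast
    then have pos: "0 < X$i$i" using psd_diag_nonneg[OF less.prems, of i] by simp
    define w where "w = (1 / sqrt (X$i$i)) *\<^sub>R column i X"
    note peel = psd_minus_outer_column[OF less.prems pos, folded w_def]
    have zero_diag: "X$j$i = 0" if "X$j$j = 0" for j
      using psd_entry_squared_le[OF less.prems, of j i] that by simp
    have "{j. (X - outer w)$j$j \<noteq> 0} \<subseteq> {j. X$j$j \<noteq> 0}"
      unfolding peel(2) using zero_diag by auto
    moreover have "(X - outer w)$i$i = 0"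
      unfolding peel(2) using pos by (simp add: power2_eq_square)
    ultimately have "{j. (X - outer w)$j$j \<noteq> 0} \<subset> {j. X$j$j \<noteq> 0}"
      using pos by force
    then have "card {j. (X - outer w)$j$j \<noteq> 0} < card {j. X$j$j \<noteq> 0}"
      by (simp add: psubset_card_mono)
    then have "0 \<le> frob M (X - outer w)" using less.hyps peel(1) by blast
    moreover have "frob M X = frob M (X - outer w) + frob M (outer w)"
      by (simp add: frob_eq_inner inner_diff_right)
    ultimately show ?thesis using psd_frob_outer_nonneg[OF M] by simp
  qed
qed

definition moore_penrose :: "real^'k^'j \<Rightarrow> real^'j^'k \<Rightarrow> bool" where
  "moore_penrose G H \<longleftrightarrow> G ** H ** G = G \<and> H ** G ** H = H \<and>
                    transpose (G ** H) = G ** H \<and> transpose (H ** G) = H ** G"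

lemma moore_penrose_unique:
  assumes 1: "moore_penrose G H1" and 2: "moore_penrose G H2"
  shows "H1 = H2"
proof -
  have a1: "G ** H1 ** G = G" "H1 ** G ** H1 = H1"
    "transpose (G ** H1) = G ** H1" "transpose (H1 ** G) = H1 ** G"
    using 1 by (auto simp: moore_penrose_def)
  have a2: "G ** H2 ** G = G" "H2 ** G ** H2 = H2"
    "transpose (G ** H2) = G ** H2" "transpose (H2 ** G) = H2 ** G"
    using 2 by (auto simp: moore_penrose_def)
  have tG1: "transpose G = transpose G ** (G ** H2)"
    by (metis a1(1) a2(1,3) matrix_transpose_mul matrix_mul_assoc)
  have tG2: "transpose G = (H1 ** G) ** transpose G"
    by (metis a1(1,4) matrix_transpose_mul matrix_mul_assoc)
  have "H1 = H1 ** (G ** H1)" by (metis a1(2) matrix_mul_assoc)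
  also have "\<dots> = H1 ** (transpose H1 ** transpose G)" by (metis a1(3) matrix_transpose_mul)
  also have "\<dots> = H1 ** (transpose H1 ** (transpose G ** (G ** H2)))" using tG1 by metis
  also have "\<dots> = H1 ** (transpose (G ** H1)) ** (G ** H2)"
    by (simp add: matrix_transpose_mul matrix_mul_assoc)
  also have "\<dots> = H1 ** G ** H2" by (metis a1(2,3) matrix_mul_assoc)
  finally have H1: "H1 = H1 ** G ** H2" .
  have "H2 = (H2 ** G) ** H2" by (metis a2(2))
  also have "\<dots> = (transpose G ** transpose H2) ** H2" by (metis a2(4) matrix_transpose_mul)
  also have "\<dots> = (((H1 ** G) ** transpose G) ** transpose H2) ** H2" using tG2 by metis
  also have "\<dots> = (H1 ** G) ** transpose (H2 ** G) ** H2"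
    by (simp add: matrix_transpose_mul matrix_mul_assoc)
  also have "\<dots> = H1 ** G ** H2" by (metis a2(2,4) matrix_mul_assoc)
  finally show ?thesis using H1 by simp
qed

lemma sym_mat_kernel_iff_orthogonal_range:
  assumes "sym_mat G"
  shows "G *v u = 0 \<longleftrightarrow> (\<forall>v. u \<bullet> (G *v v) = 0)"
proof
  show "\<forall>v. u \<bullet> (G *v v) = 0" if "G *v u = 0"
    using that sym_mat_inner_commute[OF assms, of u] by simp
  show "G *v u = 0" if "\<forall>v. u \<bullet> (G *v v) = 0"
  proof -
    have "(G *v u) \<bullet> (G *v u) = u \<bullet> (G *v (G *v u))"
      using sym_mat_inner_commute[OF assms, of "G *v u" u] by simp
    then show ?thesis using that by simp
  qed
qed

lemma sym_mat_range_left_inverse: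
  fixes G :: "real^'m^'m"
  assumes "sym_mat G"
  obtains g where "linear g" "\<And>v. g v \<in> range ((*v) G)"
    "\<And>x. x \<in> range ((*v) G) \<Longrightarrow> g (G *v x) = x"
proof -
  let ?Z = "range ((*v) G)"
  have span: "span ?Z = ?Z"
    by (simp add: span_eq_iff linear_subspace_image[OF matrix_vector_mul_linear subspace_UNIV])
  have "inj_on ((*v) G) (span ?Z)"
  proof (rule inj_onI)
    fix x y assume "x \<in> span ?Z" "y \<in> span ?Z" "G *v x = G *v y"
    then have "x - y \<in> ?Z" using span span_diff by metis
    then obtain v where v: "x - y = G *v v" by blast
    have "G *v (x - y) = 0" using \<open>G *v x = G *v y\<close> by (simp add: matrix_vector_mult_diff_distrib)
    then have "(x - y) \<bullet> (x - y) = 0"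
      using sym_mat_kernel_iff_orthogonal_range[OF assms] v by metis
    then show "x = y" by simp
  qed
  from linear_inj_on_left_inverse[OF matrix_vector_mul_linear this]
  obtain g where "linear g" and g_range: "range g \<subseteq> span ?Z"
    and g_inv: "\<And>x. x \<in> span ?Z \<Longrightarrow> g (G *v x) = x"
    by blast
  show ?thesis
  proof (rule that)
    show "linear g" by fact
    show "g v \<in> ?Z" for v using g_range span by blast
    show "g (G *v x) = x" if "x \<in> ?Z" for x using g_inv that span by simp
  qed
qed

lemma sym_mat_range_projection:
  fixes G :: "real^'m^'m"
  assumes sym: "sym_mat G" and inv: "\<And>x. x \<in> range ((*v) G) \<Longrightarrow> g (G *v x) = x"
  shows "G *v g (G *v x) = G *v x" and "(x - g (G *v x)) \<bullet> (G *v v) = 0"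
proof -
  let ?Z = "range ((*v) G)"
  have "span ?Z = ?Z"
    by (simp add: span_eq_iff linear_subspace_image[OF matrix_vector_mul_linear subspace_UNIV])
  then obtain y z where y: "y \<in> ?Z" and z: "\<forall>w\<in>?Z. orthogonal z w" and x: "x = y + z"
    using orthogonal_subspace_decomp_exists[of ?Z x] by metis
  have "G *v z = 0"
    using z sym_mat_kernel_iff_orthogonal_range[OF sym] by (simp add: orthogonal_def)
  then have "G *v x = G *v y" by (simp add: x matrix_vector_right_distrib)
  then have "g (G *v x) = y" using inv y by simp
  then show "G *v g (G *v x) = G *v x" and "(x - g (G *v x)) \<bullet> (G *v v) = 0"
    using \<open>G *v x = G *v y\<close> z x by (auto simp: orthogonal_def)
qed

lemma sym_mat_moore_penrose_exists:
  fixes G :: "real^'m^'m"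
  assumes sym: "sym_mat G"
  shows "\<exists>H. moore_penrose G H"
proof -
  obtain g where lin: "linear g" and into: "\<And>v. g v \<in> range ((*v) G)"
    and inv: "\<And>x. x \<in> range ((*v) G) \<Longrightarrow> g (G *v x) = x"
    using sym_mat_range_left_inverse[OF sym] by blast
  note proj = sym_mat_range_projection[OF sym inv]
  define P where "P x = g (G *v x)" for x
  have GP: "G *v P x = G *v x" for x by (simp add: P_def proj(1))
  have PG: "P (G *v x) = G *v x" for x by (simp add: P_def inv)
  have PP: "P (P x) = P x" for x
    unfolding P_def by (rule inv[OF into])
  have P_range: "\<exists>u. P x = G *v u" for x
    using into[of "G *v x"] by (auto simp: P_def)
  have Gg: "G *v g (P x) = P x" for x
    using P_range[of x] proj(1) by auto
  have P_orth: "P x \<bullet> (y - P y) = 0" for x y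
    using P_range[of x] proj(2)[of y] by (auto simp: P_def inner_commute)
  have P_sym: "P x \<bullet> y = x \<bullet> P y" for x y
    using P_orth[of x y] P_orth[of y x] by (simp add: inner_diff_right inner_commute)
  define H where "H = matrix (\<lambda>x. g (P x))"
  have "linear (\<lambda>x. g (P x))"
    unfolding P_def using linear_compose[OF linear_compose[OF matrix_vector_mul_linear lin] lin]
    by (simp add: o_def)
  then have H: "H *v x = g (P x)" for x by (simp add: H_def matrix_works)
  have GH: "(G ** H) *v x = P x" and HG: "(H ** G) *v x = P x" for x
    by (simp_all add: matrix_vector_mul_assoc[symmetric] H Gg PG P_def[symmetric])
  have "G ** H ** G = G" by (simp add: matrix_eq matrix_vector_mul_assoc[symmetric] H PG proj(1))
  moreover have "H ** G ** H = H"
    by (simp add: matrix_eq matrix_vector_mul_assoc[symmetric] H Gg PP)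
  moreover have "sym_mat (G ** H)" and "sym_mat (H ** G)"
    by (rule sym_matI_self_adjoint, simp add: GH HG P_sym)+
  ultimately show ?thesis unfolding moore_penrose_def sym_mat_def by blast
qed

lemma sym_mat_pinv:
  fixes G :: "real^'m^'m"
  assumes "sym_mat G"
  shows "G ** pinv G ** G = G"
proof -
  have "\<exists>!H. moore_penrose G H"
    using sym_mat_moore_penrose_exists[OF assms] moore_penrose_unique by blast
  then have "moore_penrose G (pinv G)"
    unfolding pinv_def moore_penrose_def[symmetric] by (rule theI')
  then show ?thesis by (simp add: moore_penrose_def)
qed

lemma inner_vector_in_range_gram:
  fixes v :: "'m::finite \<Rightarrow> 'a::real_inner"
  shows "(\<chi> i. v i \<bullet> w) \<in> range ((*v) (\<chi> i j. v i \<bullet> v j))"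
proof -
  define G :: "real^'m^'m" where "G = (\<chi> i j. v i \<bullet> v j)"
  define r :: "real^'m" where "r = (\<chi> i. v i \<bullet> w)"
  have sym: "sym_mat G" by (simp add: G_def sym_mat_iff inner_commute)
  have "span (range ((*v) G)) = range ((*v) G)"
    by (simp add: span_eq_iff linear_subspace_image[OF matrix_vector_mul_linear subspace_UNIV])
  then obtain y z where y: "y \<in> range ((*v) G)" and z: "\<forall>u\<in>range ((*v) G). orthogonal z u"
    and r: "r = y + z"
    using orthogonal_subspace_decomp_exists[of "range ((*v) G)" r] by metis
  have "G *v z = 0"
    using z sym_mat_kernel_iff_orthogonal_range[OF sym] by (simp add: orthogonal_def)
  define B where "B = (\<Sum>i\<in>UNIV. z$i *\<^sub>R v i)"
  have "B \<bullet> B = z \<bullet> (G *v z)"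
    by (simp add: B_def G_def inner_sum_left inner_sum_right inner_vec_def matrix_vector_mult_def
        sum_distrib_left algebra_simps inner_commute)
  then have "B = 0" using \<open>G *v z = 0\<close> by simp
  have "r \<bullet> z = B \<bullet> w"
    by (simp add: B_def r_def inner_sum_left inner_vec_def algebra_simps)
  moreover have "y \<bullet> z = 0" using y z by (auto simp: orthogonal_def inner_commute)
  ultimately have "z \<bullet> z = 0" using \<open>B = 0\<close> r by (simp add: inner_add_left)
  then show ?thesis using y r by (simp add: G_def r_def)
qed

lemma Gram_eq_inner: "Gram A Y = (\<chi> i j. (A$i ** Y) \<bullet> (A$j ** Y))"
  by (simp add: Gram_def frob_eq_inner)

lemma opA_mult_mult_transpose: "opA A (M ** Y ** transpose Y) = (\<chi> i. (A$i ** Y) \<bullet> (M ** Y))"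
  by (simp add: opA_def frob_mult_right frob_commute[of "A$_ ** Y"] frob_eq_inner[symmetric])

lemma opA_diff: "opA A (X - Z) = opA A X - opA A Z"
  by (simp add: opA_def frob_eq_inner inner_diff_right vec_eq_iff)

lemma matrix_mult_diff_rdistrib:
  fixes B C :: "'a::ring_1^'n^'m"
  shows "(B - C) ** M = B ** M - C ** M"
  by (simp add: matrix_matrix_mult_def vec_eq_iff left_diff_distrib sum_subtractf)

lemma Gram_mult_mu: "Gram A Y *v mu A C Y = opA A (C ** Y ** transpose Y)"
proof -
  obtain w where w: "opA A (C ** Y ** transpose Y) = Gram A Y *v w"
    using inner_vector_in_range_gram[of "\<lambda>i. A$i ** Y" "C ** Y"]
    by (auto simp: opA_mult_mult_transpose Gram_eq_inner)
  have "sym_mat (Gram A Y)" by (simp add: sym_mat_iff Gram_def frob_commute)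
  then show ?thesis
    by (simp add: mu_def w matrix_vector_mul_assoc matrix_mul_assoc sym_mat_pinv)
qed

lemma opA_opAadj_mult_mult_transpose:
  "opA A (opAadj A \<nu> ** Y ** transpose Y) = Gram A Y *v \<nu>"
proof -
  have "frob (A$i ** Y) (opAadj A \<nu> ** Y) = (Gram A Y *v \<nu>)$i" for i
  proof -
    have "frob (A$i ** Y) (opAadj A \<nu> ** Y) = frob (opAadj A \<nu> ** Y) (A$i ** Y)"
      by (rule frob_commute)
    also have "\<dots> = frob (opAadj A \<nu>) (A$i ** Y ** transpose Y)"
      by (rule frob_mult_right)
    also have "\<dots> = \<nu> \<bullet> opA A (A$i ** Y ** transpose Y)"
      by (rule frob_opAadj)
    also have "\<dots> = (Gram A Y *v \<nu>)$i"
      by (simp add: opA_mult_mult_transpose Gram_eq_inner inner_vec_def matrix_vector_mult_def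
          inner_commute mult.commute)
    finally show ?thesis .
  qed
  then show ?thesis by (simp add: opA_def frob_mult_right vec_eq_iff)
qed

lemma opA_Smat_mult_mult_transpose: "opA A (Smat A C Y ** Y ** transpose Y) = 0"
  by (simp add: Smat_def matrix_mult_diff_rdistrib opA_diff opA_opAadj_mult_mult_transpose
      Gram_mult_mu)

lemma pd_coercive:
  fixes X :: "real^'n^'n"
  assumes "pd X"
  obtains c where "c > 0" "\<And>x. c * (x \<bullet> x) \<le> x \<bullet> (X *v x)"
proof -
  let ?q = "\<lambda>x. x \<bullet> (X *v x)"
  have cont: "continuous_on (sphere 0 1) ?q"
    by (intro continuous_intros matrix_vector_mult_linear_continuous_on[unfolded o_def])
  have "axis i (1::real) \<in> sphere 0 1" for i :: 'n by (simp add: norm_axis_1)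
  then have "sphere (0::real^'n) 1 \<noteq> {}" by blast
  then obtain u where u: "u \<in> sphere 0 1" and min: "\<And>y. y \<in> sphere 0 1 \<Longrightarrow> ?q u \<le> ?q y"
    using continuous_attains_inf[OF compact_sphere _ cont] by blast
  have "u \<noteq> 0" using u by auto
  then have pos: "?q u > 0" using assms by (simp add: pd_def)
  have "?q u * (x \<bullet> x) \<le> ?q x" for x
  proof (cases "x = 0")
    case False
    define v where "v = (1 / norm x) *\<^sub>R x"
    have "v \<in> sphere 0 1" using False by (simp add: v_def)
    have x: "x = norm x *\<^sub>R v" using False by (simp add: v_def)
    have "?q x = (norm x)\<^sup>2 * ?q v"
      by (subst (1 2) x) (simp add: matrix_vector_mult_scaleR power2_eq_square)
    moreover have "x \<bullet> x = (norm x)\<^sup>2" by (simp add: power2_norm_eq_inner)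
    ultimately show ?thesis
      using min[OF \<open>v \<in> sphere 0 1\<close>] by (metis mult_right_mono mult.commute zero_le_power2)
  qed simp
  then show ?thesis using that pos by blast
qed

lemma pd_add_small_sym_psd:
  fixes X Z :: "real^'n^'n"
  assumes "pd X" and "sym_mat Z"
  obtains \<epsilon> where "\<epsilon> > 0" and "psd (X + \<epsilon> *\<^sub>R Z)"
proof -
  obtain c where "c > 0" and c: "\<And>x. c * (x \<bullet> x) \<le> x \<bullet> (X *v x)"
    using pd_coercive[OF assms(1)] by blast
  obtain K where "K > 0" and K: "\<And>x. norm (Z *v x) \<le> norm x * K"
    using bounded_linear.pos_bounded[OF matrix_vector_mul_bounded_linear] by blast
  define \<epsilon> where "\<epsilon> = c / K"
  have "\<epsilon> > 0" using \<open>c > 0\<close> \<open>K > 0\<close> by (simp add: \<epsilon>_def)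
  have "0 \<le> x \<bullet> ((X + \<epsilon> *\<^sub>R Z) *v x)" for x
  proof -
    have "\<bar>x \<bullet> (Z *v x)\<bar> \<le> norm x * (norm x * K)"
      using Cauchy_Schwarz_ineq2[of x "Z *v x"] K[of x] by (meson mult_left_mono norm_ge_zero order_trans)
    then have "\<epsilon> * \<bar>x \<bullet> (Z *v x)\<bar> \<le> c * (x \<bullet> x)"
      using \<open>\<epsilon> > 0\<close> \<open>K > 0\<close>
      by (simp add: \<epsilon>_def power2_norm_eq_inner[symmetric] power2_eq_square field_simps)
    moreover have "x \<bullet> ((X + \<epsilon> *\<^sub>R Z) *v x) = x \<bullet> (X *v x) + \<epsilon> * (x \<bullet> (Z *v x))"
      by (simp add: matrix_vector_mult_add_rdistrib matrix_scaleR_vector_ac[symmetric]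
          matrix_vector_mult_scaleR inner_add_right)
    moreover have "- (\<epsilon> * \<bar>x \<bullet> (Z *v x)\<bar>) \<le> \<epsilon> * (x \<bullet> (Z *v x))"
      using \<open>\<epsilon> > 0\<close> abs_ge_minus_self[of "\<epsilon> * (x \<bullet> (Z *v x))"] by (simp add: abs_mult)
    ultimately show ?thesis using c[of x] by linarith
  qed
  moreover have "sym_mat (X + \<epsilon> *\<^sub>R Z)"
    using assms by (simp add: pd_def sym_mat_iff)
  ultimately show ?thesis using that \<open>\<epsilon> > 0\<close> by (simp add: psd_def)
qed

lemma sym_mat_opAadj: "\<forall>i. sym_mat (A$i) \<Longrightarrow> sym_mat (opAadj A \<nu>)"
  by (simp add: sym_mat_iff opAadj_def sum_component)

text \<open>If \<open>I\<close> had a nonzero component \<open>Z\<close> orthogonal to \<open>im \<A>\<^sup>*\<close>, then \<open>\<A>(Z) = 0\<close> and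
  \<open>tr Z = \<langle>Z, Z\<rangle> > 0\<close>, so moving a positive definite feasible point along \<open>Z\<close> would stay
  feasible and change the trace.\<close>

lemma mat1_in_range_opAadj:
  assumes symA: "\<forall>i. sym_mat (A$i)"
    and trace_const: "\<forall>X\<in>feas A b. trace X = t"
    and X0: "X0 \<in> feas A b" and "pd X0"
  shows "mat 1 \<in> range (opAadj A)"
proof -
  have "subspace (range (opAadj A))"
    by (simp add: linear_subspace_image subspace_UNIV linearI opAadj_def scaleR_add_left
        sum.distrib scaleR_sum_right)
  then obtain u Z where u: "u \<in> range (opAadj A)"
    and Z: "\<And>v. v \<in> range (opAadj A) \<Longrightarrow> orthogonal Z v" and I: "mat 1 = u + Z"
    using orthogonal_subspace_decomp_exists[of "range (opAadj A)" "mat 1"] span_eq_iff by metis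
  have "Z = 0"
  proof (rule ccontr)
    assume "Z \<noteq> 0"
    have "opA A Z \<bullet> opA A Z = 0"
      using Z[of "opAadj A (opA A Z)"] by (simp add: orthogonal_def inner_commute frob_opAadj[symmetric] frob_eq_inner)
    then have AZ: "opA A Z = 0" by simp
    obtain \<nu> where "Z = mat 1 - opAadj A \<nu>" using u I by (metis add_diff_cancel_left' rangeE)
    then have "sym_mat Z" using sym_mat_opAadj[OF symA, of \<nu>] by (auto simp: sym_mat_iff mat_def)
    then obtain \<epsilon> where "\<epsilon> > 0" and psd: "psd (X0 + \<epsilon> *\<^sub>R Z)"
      using pd_add_small_sym_psd[OF \<open>pd X0\<close>] by blast
    have "X0 + \<epsilon> *\<^sub>R Z \<in> feas A b"
      using X0 psd AZ by (simp add: feas_def psd_def opA_def frob_eq_inner inner_add_right vec_eq_iff)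
    then have "trace (X0 + \<epsilon> *\<^sub>R Z) = trace X0" using X0 trace_const by simp
    moreover have "trace Z = Z \<bullet> Z"
      using Z[OF u] by (simp add: frob_mat1_left[symmetric] frob_eq_inner I inner_add_left inner_add_right
        orthogonal_def inner_commute)
    ultimately show False
      using \<open>Z \<noteq> 0\<close> \<open>\<epsilon> > 0\<close> by (simp add: frob_mat1_left[symmetric] frob_eq_inner inner_add_right)
  qed
  then show ?thesis using u I by simp
qed

lemma gfun_eq_frob: "gfun C Y = frob C (Y ** transpose Y)"
  by (simp add: gfun_def frob_mult_right)

lemma mult_transpose_in_feas:
  assumes "Y \<in> Mp A b"
  shows "Y ** transpose Y \<in> feas A b"
proof -
  have "x \<bullet> ((Y ** transpose Y) *v x) = (transpose Y *v x) \<bullet> (transpose Y *v x)" for x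
    by (metis matrix_vector_mul_assoc dot_lmul_matrix transpose_matrix_vector)
  then show ?thesis
    using assms sym_mat_mult_transpose by (simp add: feas_def Mp_def psd_def)
qed

lemma gfun_minus_frob_feas:
  assumes "Y \<in> Mp A b" and "X \<in> feas A b"
  shows "gfun C Y - frob C X = frob (Smat A C Y) (Y ** transpose Y) - frob (Smat A C Y) X"
proof -
  have C: "frob C Z = frob (Smat A C Y) Z + mu A C Y \<bullet> opA A Z" for Z
    by (simp add: Smat_def frob_eq_inner inner_diff_left frob_opAadj[symmetric])
  have "opA A (Y ** transpose Y) = opA A X"
    using assms(2) mult_transpose_in_feas[OF assms(1)] by (simp add: feas_def)
  then show ?thesis by (simp add: gfun_eq_frob C)
qed

lemma neg_frob_le_trace:
  assumes "psd (S + E *\<^sub>R mat 1)" and "psd X"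
  shows "- frob S X \<le> E * trace X"
proof -
  have "0 \<le> frob (S + E *\<^sub>R mat 1) X" using psd_frob_nonneg assms by blast
  also have "\<dots> = frob S X + E * trace X"
    by (simp add: frob_mat1_left[symmetric] frob_eq_inner inner_add_left)
  finally show ?thesis by simp
qed

lemma frob_Smat_le_norm_rgrad:
  "2 * frob (Smat A C Y) (Y ** transpose Y) \<le> frob_norm (rgrad A C Y) * sqrt (trace (Y ** transpose Y))"
proof -
  have "frob (Smat A C Y) (Y ** transpose Y) = (Smat A C Y ** Y) \<bullet> Y"
    using frob_mult_right[of "Smat A C Y" Y Y] by (simp add: frob_eq_inner)
  then have "2 * frob (Smat A C Y) (Y ** transpose Y) = rgrad A C Y \<bullet> Y"
    by (simp add: rgrad_def)
  also have "\<dots> \<le> norm (rgrad A C Y) * norm Y" by (rule norm_cauchy_schwarz)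
  finally show ?thesis by (simp add: frob_norm_eq_norm norm_squared_eq_trace[symmetric])
qed

lemma frob_Smat_eq_0_if_mat1_in_range:
  assumes "mat 1 \<in> range (opAadj A)"
  shows "frob (Smat A C Y) (Y ** transpose Y) = 0"
proof -
  obtain \<nu> where \<nu>: "mat 1 = opAadj A \<nu>" using assms by blast
  have "frob (Smat A C Y) (Y ** transpose Y) = frob (mat 1 ** Y) (Smat A C Y ** Y)"
    by (simp add: frob_mult_right[symmetric] frob_commute)
  also have "\<dots> = \<nu> \<bullet> opA A (Smat A C Y ** Y ** transpose Y)"
    by (simp only: frob_mult_right \<nu> frob_opAadj)
  also have "\<dots> = 0" by (simp add: opA_Smat_mult_mult_transpose)
  finally show ?thesis .
qed

lemma compact_feas_bounded:
  assumes "compact (feas A b)"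
  shows "bdd_below ((\<lambda>X. frob C X) ` feas A b)" and "bdd_above (trace ` feas A b)"
proof -
  have "compact ((\<lambda>X. frob M X) ` feas A b)" for M
    unfolding frob_eq_inner by (intro compact_continuous_image[OF _ assms] continuous_intros)
  then show "bdd_below ((\<lambda>X. frob C X) ` feas A b)" "bdd_above (trace ` feas A b)"
    by (simp_all add: bounded_imp_bdd_below bounded_imp_bdd_above compact_imp_bounded
        frob_mat1_left[abs_def, symmetric])
qed

lemma gfun_minus_Inf_le:
  assumes Y: "Y \<in> Mp A b" and "feas A b \<noteq> {}" and "0 \<le> E"
    and hess: "psd (Smat A C Y + E *\<^sub>R mat 1)" and trace_le: "\<forall>X\<in>feas A b. trace X \<le> R"
  shows "gfun C Y - Inf ((\<lambda>X. frob C X) ` feas A b)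
         \<le> E * R + frob (Smat A C Y) (Y ** transpose Y)"
proof -
  have "gfun C Y - frob C X \<le> E * R + frob (Smat A C Y) (Y ** transpose Y)"
    if "X \<in> feas A b" for X
  proof -
    have "- frob (Smat A C Y) X \<le> E * trace X"
      using that hess by (simp add: feas_def neg_frob_le_trace)
    also have "\<dots> \<le> E * R" using that trace_le \<open>0 \<le> E\<close> by (simp add: mult_left_mono)
    finally show ?thesis using gfun_minus_frob_feas[OF Y that] by simp
  qed
  then have "gfun C Y - (E * R + frob (Smat A C Y) (Y ** transpose Y))
             \<le> Inf ((\<lambda>X. frob C X) ` feas A b)"
    using \<open>feas A b \<noteq> {}\<close> by (force intro: cInf_greatest)
  then show ?thesis by simp
qed

theorem lemma4:
  fixes A :: "(real^'n^'n)^'m" and b :: "real^'m" and C :: "real^'n^'n"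
    and Y :: "real^'p^'n" and eps_g eps_H fstar R :: real
  assumes symA: "\<forall>i. sym_mat (A$i)"
    and symC: "sym_mat C"
    and ne: "feas A b \<noteq> {}"
    and A1: "assumption1 A b TYPE('p)"
    and cpt: "compact (feas A b)"
    and fstar_def: "fstar = Inf ((\<lambda>X. frob C X) ` feas A b)"
    and R_def: "R = Sup (trace ` feas A b)"
    and eps_g: "0 \<le> eps_g" and eps_H: "0 \<le> eps_H"
    and YM: "Y \<in> Mp A b"
    and grad: "frob_norm (rgrad A C Y) \<le> eps_g"
    and hess: "psd (Smat A C Y + (eps_H / 2) *\<^sub>R mat 1)"
  shows "0 \<le> 2 * (gfun C Y - fstar)
         \<and> 2 * (gfun C Y - fstar) \<le> eps_H * R + eps_g * sqrt R
         \<and> (mat 1 \<in> range (opAadj A) \<longrightarrow> 2 * (gfun C Y - fstar) \<le> eps_H * R)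
         \<and> (((\<exists>t. \<forall>X\<in>feas A b. trace X = t) \<and> (\<exists>X\<in>feas A b. pd X))
              \<longrightarrow> mat 1 \<in> range (opAadj A))"
proof -
  let ?s = "frob (Smat A C Y) (Y ** transpose Y)"
  note bdd = compact_feas_bounded[OF cpt]
  have YYt: "Y ** transpose Y \<in> feas A b" using mult_transpose_in_feas[OF YM] .
  have trace_le: "\<forall>X\<in>feas A b. trace X \<le> R" using bdd(2) by (simp add: R_def cSup_upper)
  have "fstar \<le> gfun C Y" using YYt bdd(1) by (simp add: fstar_def gfun_eq_frob cInf_lower)
  moreover have gap: "2 * (gfun C Y - fstar) \<le> eps_H * R + 2 * ?s"
    using gfun_minus_Inf_le[OF YM ne _ hess trace_le] eps_H by (simp add: fstar_def)
  moreover have "2 * ?s \<le> eps_g * sqrt R"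
  proof -
    have "2 * ?s \<le> frob_norm (rgrad A C Y) * sqrt (trace (Y ** transpose Y))"
      by (rule frob_Smat_le_norm_rgrad)
    also have "\<dots> \<le> eps_g * sqrt R"
    proof (rule mult_mono[OF grad])
      show "sqrt (trace (Y ** transpose Y)) \<le> sqrt R" using trace_le YYt by simp
      show "0 \<le> sqrt (trace (Y ** transpose Y))" by (simp add: norm_squared_eq_trace[symmetric])
    qed (rule eps_g)
    finally show ?thesis .
  qed
  moreover have "2 * (gfun C Y - fstar) \<le> eps_H * R" if "mat 1 \<in> range (opAadj A)"
    using gap frob_Smat_eq_0_if_mat1_in_range[OF that, of C Y] by simp
  moreover have "mat 1 \<in> range (opAadj A)"
    if "\<exists>t. \<forall>X\<in>feas A b. trace X = t" and "\<exists>X\<in>feas A b. pd X"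
    using that mat1_in_range_opAadj[OF symA] by blast
  ultimately show ?thesis by auto
qed

end
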